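(* Fix a $d$-RSK growth diagram on a Young diagram $F$ and a lattice point $p$ of $F$ such that $\mathrm{Rect}_p$ contains no se-chain of length $d$. Then every cell of $\mathrm{Rect}_p$ satisfies the RSK local rule.
   Context: Partitions: finite weakly decreasing sequences of positive integers, $\lambda_i=0$ for $i>\ell(\lambda)$; $d$-partitions have $\ell\le d$; $\alpha\prec\beta$ (also $\beta\succ\alpha$) means $\beta_1\ge\alpha_1\ge\beta_2\ge\alpha_2\ge\cdots$. Young diagrams lie in the first quadrant with unit cells at integer lattice points, left-justified, rows stacked upward; lattice points are cell corners; a filling assigns nonnegative integers to cells. For a lattice point $p=(x,y)$, $\mathrm{Rect}_p$ is the rectangle $[0,x]\times[0,y]$ viewed as a Young diagram. A se-chain is a sequence of cells with nonzero entries, each strictly below and strictly to the right of the previous; its length is the number of cells. For a cell with entry $m$ and bottom-left, top-left, bottom-right, top-right corners $\kappa,\mu,\nu,\rho$: the RSK local rule requires $\mu\succ\kappa\prec\nu$, $\mu\prec\rho\succ\nu$, $\rho_1=m+\max(\mu_1,\nu_1)$, and $\rho_i+\kappa_{i-1}=\min(\mu_{i-1},\nu_{i-1})+\max(\mu_i,\nu_i)$ for all $i\ge2$. The $d$-RSK local rule requires all four to be $d$-partitions, $\mu\succ\kappa\prec\nu$, $\mu\prec\rho\succ\nu$, $m=0$ or $\kappa_d=0$, $\rho_1+\kappa_d=m+\min(\mu_d,\nu_d)+\max(\mu_1,\nu_1)$, and $\rho_i+\kappa_{i-1}=\min(\mu_{i-1},\nu_{i-1})+\max(\mu_i,\nu_i)$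 for $2\le i\le d$. A $d$-RSK growth diagram on $F$ is a filling plus a partition at each lattice point, with $\emptyset$ at all lattice points on the coordinate axes, every cell satisfying the $d$-RSK local rule. *)

theory Defs
  imports Main
begin

text \<open>Partitions are represented as functions lam :: nat => nat, with parts
  lam 1, lam 2, ... (index 0 unused and required to be 0), weakly decreasing
  and finitely supported.\<close>

type_synonym partition = "nat \<Rightarrow> nat"

definition is_partition :: "partition \<Rightarrow> bool" where
  "is_partition lam \<longleftrightarrow> lam 0 = 0 \<and> (\<forall>i\<ge>1. lam (Suc i) \<le> lam i) \<and> finite {i. lam i \<noteq> 0}"

definition empty_partition :: partition where
  "empty_partition = (\<lambda>_. 0)"

definition is_d_partition :: "nat \<Rightarrow> partition \<Rightarrow> bool" where
  "is_d_partition d lam \<longleftrightarrow> is_partition lam \<and> (\<forall>i>d. lam i = 0)"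

definition interlaces :: "partition \<Rightarrow> partition \<Rightarrow> bool" where
  "interlaces a b \<longleftrightarrow> (\<forall>i\<ge>1. a i \<le> b i \<and> b (Suc i) \<le> a i)"

definition rsk_local_rule ::
  "partition \<Rightarrow> partition \<Rightarrow> partition \<Rightarrow> partition \<Rightarrow> nat \<Rightarrow> bool" where
  "rsk_local_rule \<kappa> \<mu> \<nu> \<rho> m \<longleftrightarrow>
     is_partition \<kappa> \<and> is_partition \<mu> \<and> is_partition \<nu> \<and> is_partition \<rho> \<and>
     interlaces \<kappa> \<mu> \<and> interlaces \<kappa> \<nu> \<and> interlaces \<mu> \<rho> \<and> interlaces \<nu> \<rho> \<and>
     \<rho> 1 = m + max (\<mu> 1) (\<nu> 1) \<and>
     (\<forall>i\<ge>2. \<rho> i + \<kappa> (i - 1) = min (\<mu> (i - 1)) (\<nu> (i - 1)) + max (\<mu> i) (\<nu> i))"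

definition d_rsk_local_rule ::
  "nat \<Rightarrow> partition \<Rightarrow> partition \<Rightarrow> partition \<Rightarrow> partition \<Rightarrow> nat \<Rightarrow> bool" where
  "d_rsk_local_rule d \<kappa> \<mu> \<nu> \<rho> m \<longleftrightarrow>
     is_d_partition d \<kappa> \<and> is_d_partition d \<mu> \<and> is_d_partition d \<nu> \<and> is_d_partition d \<rho> \<and>
     interlaces \<kappa> \<mu> \<and> interlaces \<kappa> \<nu> \<and> interlaces \<mu> \<rho> \<and> interlaces \<nu> \<rho> \<and>
     (m = 0 \<or> \<kappa> d = 0) \<and>
     \<rho> 1 + \<kappa> d = m + min (\<mu> d) (\<nu> d) + max (\<mu> 1) (\<nu> 1) \<and>
     (\<forall>i. 2 \<le> i \<and> i \<le> d \<longrightarrow>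
        \<rho> i + \<kappa> (i - 1) = min (\<mu> (i - 1)) (\<nu> (i - 1)) + max (\<mu> i) (\<nu> i))"

text \<open>Cells: the unit cell [i-1,i] x [j-1,j] is named (i,j) by its top-right corner,
  with i,j >= 1 (i = column, j = row counted upward).\<close>

definition young_diagram :: "(nat \<times> nat) set \<Rightarrow> bool" where
  "young_diagram F \<longleftrightarrow> finite F \<and> (\<forall>(i,j)\<in>F. i \<ge> 1 \<and> j \<ge> 1) \<and>
     (\<forall>i j i' j'. (i,j) \<in> F \<and> 1 \<le> i' \<and> i' \<le> i \<and> 1 \<le> j' \<and> j' \<le> j \<longrightarrow> (i',j') \<in> F)"

definition lattice_points :: "(nat \<times> nat) set \<Rightarrow> (nat \<times> nat) set" where
  "lattice_points F = {(0,0)} \<union>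
     {(x,y). \<exists>(i,j)\<in>F. (x = i - 1 \<or> x = i) \<and> (y = j - 1 \<or> y = j)}"

definition rect :: "nat \<times> nat \<Rightarrow> (nat \<times> nat) set" where
  "rect p = {(i,j). 1 \<le> i \<and> i \<le> fst p \<and> 1 \<le> j \<and> j \<le> snd p}"

definition se_chain :: "(nat \<times> nat \<Rightarrow> nat) \<Rightarrow> (nat \<times> nat) set \<Rightarrow> (nat \<times> nat) list \<Rightarrow> bool" where
  "se_chain fill S cs \<longleftrightarrow> set cs \<subseteq> S \<and> (\<forall>c\<in>set cs. fill c \<noteq> 0) \<and>
     (\<forall>k. Suc k < length cs \<longrightarrow>
        fst (cs ! k) < fst (cs ! Suc k) \<and> snd (cs ! Suc k) < snd (cs ! k))"

definition cell_satisfies_rsk ::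
  "(nat \<times> nat \<Rightarrow> nat) \<Rightarrow> (nat \<times> nat \<Rightarrow> partition) \<Rightarrow> nat \<times> nat \<Rightarrow> bool" where
  "cell_satisfies_rsk fill lam c \<longleftrightarrow> (case c of (i,j) \<Rightarrow>
     rsk_local_rule (lam (i - 1, j - 1)) (lam (i - 1, j)) (lam (i, j - 1)) (lam (i, j)) (fill (i,j)))"

definition cell_satisfies_d_rsk ::
  "nat \<Rightarrow> (nat \<times> nat \<Rightarrow> nat) \<Rightarrow> (nat \<times> nat \<Rightarrow> partition) \<Rightarrow> nat \<times> nat \<Rightarrow> bool" where
  "cell_satisfies_d_rsk d fill lam c \<longleftrightarrow> (case c of (i,j) \<Rightarrow>
     d_rsk_local_rule d (lam (i - 1, j - 1)) (lam (i - 1, j)) (lam (i, j - 1)) (lam (i, j)) (fill (i,j)))"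

definition d_rsk_growth_diagram ::
  "nat \<Rightarrow> (nat \<times> nat) set \<Rightarrow> (nat \<times> nat \<Rightarrow> nat) \<Rightarrow> (nat \<times> nat \<Rightarrow> partition) \<Rightarrow> bool" where
  "d_rsk_growth_diagram d F fill lam \<longleftrightarrow>
     young_diagram F \<and>
     (\<forall>q\<in>lattice_points F. is_partition (lam q)) \<and>
     (\<forall>q\<in>lattice_points F. fst q = 0 \<or> snd q = 0 \<longrightarrow> lam q = empty_partition) \<and>
     (\<forall>c\<in>F. cell_satisfies_d_rsk d fill lam c)"

end

theory Submission
  imports Defs "HOL-Library.Sublist"
begin

text \<open>Read the filling of rect q column by column, each column bottom to top, as a word in
  which the cell (i, j) contributes fill (i, j) letters j, and row-insert this word into a
  tableau.  Two classical facts about RSK drive the proof.  First, the shapes of these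
  insertion tableaux obey the RSK local rule (Fomin): split a tableau into its entries below
  the largest letter j and the letters j, and follow how the letters j are pushed up row by
  row while a column is inserted.  Second (Schensted), an insertion tableau with k rows comes
  from a word with a strictly decreasing subsequence of length k: its first column, read top
  down, is one in the reading word, and the Knuth transformations leading from the reading
  word back to the word preserve such subsequences.  A strictly decreasing subsequence of the
  word of rect q is an se-chain, so inside rect p all these tableaux have fewer than d rows.
  Where the d-th parts at three corners of a cell vanish, the d-RSK local rule is the RSK
  local rule, so by induction the growth diagram agrees on rect p with the shapes of the
  insertion tableaux and satisfies the RSK local rule there.\<close>

section \<open>Row insertion into tableaux\<close>

text \<open>A tableau is the list of its rows, bottom row first.\<close>

fun row_insert :: "nat \<Rightarrow> nat list \<Rightarrow> nat option \<times> nat list" where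
  "row_insert x [] = (None, [x])"
| "row_insert x (y # ys) = (if x < y then (Some y, x # ys)
     else (let (b, ys') = row_insert x ys in (b, y # ys')))"

fun tab_insert :: "nat \<Rightarrow> nat list list \<Rightarrow> nat list list" where
  "tab_insert x [] = [[x]]"
| "tab_insert x (r # rs) = (case row_insert x r of
     (None, r') \<Rightarrow> r' # rs
   | (Some z, r') \<Rightarrow> r' # tab_insert z rs)"

fun new_box_row :: "nat \<Rightarrow> nat list list \<Rightarrow> nat" where
  "new_box_row x [] = 0"
| "new_box_row x (r # rs) = (case row_insert x r of
     (None, r') \<Rightarrow> 0
   | (Some z, r') \<Rightarrow> Suc (new_box_row z rs))"

definition tab_insert_word :: "nat list \<Rightarrow> nat list list \<Rightarrow> nat list list" where
  "tab_insert_word w T = foldl (\<lambda>T x. tab_insert x T) T w"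

definition insertion_tableau :: "nat list \<Rightarrow> nat list list" where
  "insertion_tableau w = tab_insert_word w []"

definition tab_row :: "nat list list \<Rightarrow> nat \<Rightarrow> nat list" where
  "tab_row T s = (if s < length T then T ! s else [])"

abbreviation tab_entries :: "nat list list \<Rightarrow> nat set" where
  "tab_entries T \<equiv> \<Union> (set ` set T)"

lemma tab_insert_word_simps [simp]:
  "tab_insert_word [] T = T"
  "tab_insert_word (x # w) T = tab_insert_word w (tab_insert x T)"
  "tab_insert_word (u @ v) T = tab_insert_word v (tab_insert_word u T)"
  by (simp_all add: tab_insert_word_def)

lemma insertion_tableau_Nil [simp]: "insertion_tableau [] = []"
  by (simp add: insertion_tableau_def)

lemma insertion_tableau_snoc: "insertion_tableau (w @ [x]) = tab_insert x (insertion_tableau w)"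
  by (simp add: insertion_tableau_def)

lemma insertion_tableau_append: "insertion_tableau (u @ v) = tab_insert_word v (insertion_tableau u)"
  by (simp add: insertion_tableau_def)

lemma tab_row_simps [simp]:
  "tab_row [] s = []" "tab_row (r # rs) 0 = r" "tab_row (r # rs) (Suc s) = tab_row rs s"
  by (simp_all add: tab_row_def)

lemma row_insert_NoneD: "row_insert x r = (None, r') \<Longrightarrow> r' = r @ [x] \<and> (\<forall>e\<in>set r. e \<le> x)"
  by (induction x r arbitrary: r' rule: row_insert.induct) (auto split: if_splits prod.splits)

lemma row_insert_SomeD:
  "row_insert x r = (Some z, r') \<Longrightarrow>
     \<exists>u v. r = u @ z # v \<and> r' = u @ x # v \<and> (\<forall>e\<in>set u. e \<le> x) \<and> x < z"
proof (induction x r arbitrary: r' rule: row_insert.induct)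
  case (1 x)
  then show ?case by simp
next
  case (2 x y ys)
  show ?case
  proof (cases "x < y")
    case True
    then show ?thesis using "2.prems" by force
  next
    case False
    obtain b ys' where ys': "row_insert x ys = (b, ys')" by fastforce
    with "2.prems" False have "b = Some z" "r' = y # ys'" by auto
    with "2.IH"[OF False] ys' obtain u v
      where "ys = u @ z # v" "ys' = u @ x # v" "\<forall>e\<in>set u. e \<le> x" "x < z"
      by fastforce
    with \<open>r' = y # ys'\<close> False show ?thesis
      by (intro exI[of _ "y # u"] exI[of _ v]) auto
  qed
qed

lemma row_insert_all_le: "\<forall>e\<in>set r. e \<le> x \<Longrightarrow> row_insert x r = (None, r @ [x])"
  by (induction r) auto

lemma row_insert_append_left:
  "\<forall>e\<in>set r. e \<le> x \<Longrightarrow> row_insert x (r @ s) = (fst (row_insert x s), r @ snd (row_insert x s))"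
  by (induction r) (auto split: prod.splits)

lemma row_insert_append_right:
  "\<exists>e\<in>set r. x < e \<Longrightarrow> row_insert x (r @ s) = (fst (row_insert x r), snd (row_insert x r) @ s)"
  by (induction x r rule: row_insert.induct) (auto split: prod.splits, blast+)

lemma row_insert_set: "set (snd (row_insert x r)) \<subseteq> insert x (set r)"
  by (induction x r rule: row_insert.induct) (auto split: prod.splits)

lemma row_insert_bumped_in_row: "row_insert x r = (Some z, r') \<Longrightarrow> z \<in> set r"
  by (auto dest!: row_insert_SomeD)

lemma length_row_insert:
  "length (snd (row_insert x r)) = length r + (if fst (row_insert x r) = None then 1 else 0)"
  by (induction x r rule: row_insert.induct) (auto split: prod.splits)

lemma hd_row_insert: "hd (snd (row_insert x r)) = (if r = [] \<or> x < hd r then x else hd r)"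
  by (cases r) (auto split: prod.splits)

lemma sorted_row_insert: "sorted r \<Longrightarrow> sorted (snd (row_insert x r))"
proof (induction x r rule: row_insert.induct)
  case (1 x)
  then show ?case by simp
next
  case (2 x y ys)
  show ?case
  proof (cases "x < y")
    case True
    then show ?thesis using "2.prems" by auto
  next
    case False
    obtain b ys' where ys': "row_insert x ys = (b, ys')" by fastforce
    then have "sorted ys'" "set ys' \<subseteq> insert x (set ys)"
      using "2" False row_insert_set[of x ys] by auto
    then show ?thesis using False ys' "2.prems" by auto
  qed
qed

lemma row_bumping_Some:
  assumes "sorted r" "x \<le> x'" "row_insert x r = (Some z, r1)" "row_insert x' r1 = (Some z', r2)"
  shows "z \<le> z'"
proof -
  obtain u v where uv: "r = u @ z # v" "r1 = u @ x # v" "\<forall>e\<in>set u. e \<le> x"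
    using row_insert_SomeD[OF assms(3)] by blast
  have "row_insert x' ((u @ [x]) @ v) = (fst (row_insert x' v), (u @ [x]) @ snd (row_insert x' v))"
    by (rule row_insert_append_left) (use uv assms(2) in auto)
  then have "fst (row_insert x' v) = Some z'"
    using assms(4) uv(2) by simp
  then have "z' \<in> set v" by (metis row_insert_bumped_in_row prod.collapse)
  moreover have "\<forall>e\<in>set v. z \<le> e" using assms(1) uv(1) by (simp add: sorted_append)
  ultimately show ?thesis by blast
qed

lemma row_bumping_None:
  assumes "x \<le> x'" "row_insert x r = (None, r1)"
  shows "fst (row_insert x' r1) = None"
proof -
  have "\<forall>e\<in>set r1. e \<le> x'" using row_insert_NoneD[OF assms(2)] assms(1) by auto
  then show ?thesis by (simp add: row_insert_all_le)
qed

lemma tab_insert_sorted_rows: "\<forall>r\<in>set T. sorted r \<Longrightarrow> \<forall>r\<in>set (tab_insert x T). sorted r"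
proof (induction x T rule: tab_insert.induct)
  case (2 x r rs)
  then show ?case
    using sorted_row_insert[of r x] by (cases "row_insert x r") (auto split: option.splits)
qed simp

lemma tab_entries_tab_insert: "tab_entries (tab_insert x T) \<subseteq> insert x (tab_entries T)"
proof (induction x T rule: tab_insert.induct)
  case (2 x r rs)
  then show ?case
    using row_insert_set[of x r] row_insert_bumped_in_row[of x r]
    by (cases "row_insert x r") (fastforce split: option.splits)
qed simp

lemma tab_insert_rows_nonempty: "\<forall>r\<in>set T. r \<noteq> [] \<Longrightarrow> \<forall>r\<in>set (tab_insert x T). r \<noteq> []"
proof (induction x T rule: tab_insert.induct)
  case (2 x r rs)
  then show ?case
    using length_row_insert[of x r] by (cases "row_insert x r") (auto split: option.splits)
qed simp

lemma length_tab_row_tab_insert: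
  "length (tab_row (tab_insert x T) s) = length (tab_row T s) + (if s = new_box_row x T then 1 else 0)"
proof (induction x T arbitrary: s rule: tab_insert.induct)
  case (1 x)
  then show ?case by (cases s) auto
next
  case (2 x r rs)
  then show ?case
    using length_row_insert[of x r] by (cases "row_insert x r"; cases s) (auto split: option.splits)
qed

lemma new_box_row_tab_insert_le:
  "\<forall>r\<in>set T. sorted r \<Longrightarrow> x \<le> x' \<Longrightarrow> new_box_row x' (tab_insert x T) \<le> new_box_row x T"
proof (induction x T arbitrary: x' rule: tab_insert.induct)
  case (2 x r rs)
  obtain b r1 where ins: "row_insert x r = (b, r1)" by fastforce
  obtain b' r2 where ins': "row_insert x' r1 = (b', r2)" by fastforce
  show ?case
  proof (cases b)
    case None
    then have "b' = None" using row_bumping_None "2.prems"(2) ins ins' by fastforce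
    with None ins ins' show ?thesis by simp
  next
    case (Some z)
    show ?thesis
    proof (cases b')
      case (Some z')
      then have "z \<le> z'" using row_bumping_Some "2.prems" ins ins' \<open>b = Some z\<close> by auto
      then have "new_box_row z' (tab_insert z rs) \<le> new_box_row z rs"
        using "2.IH"[OF ins[symmetric] \<open>b = Some z\<close>] "2.prems" by auto
      with Some ins ins' \<open>b = Some z\<close> show ?thesis by simp
    qed (use ins ins' \<open>b = Some z\<close> in simp)
  qed
qed simp

lemma insertion_tableau_sorted_rows: "\<forall>r\<in>set (insertion_tableau w). sorted r"
  by (induction w rule: rev_induct) (simp_all add: insertion_tableau_snoc tab_insert_sorted_rows)

lemma tab_entries_insertion_tableau: "tab_entries (insertion_tableau w) \<subseteq> set w"
proof (induction w rule: rev_induct)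
  case (snoc x w)
  then show ?case using tab_entries_tab_insert[of x "insertion_tableau w"]
    by (simp add: insertion_tableau_snoc) blast
qed simp

section \<open>Schensted's theorem for the number of rows\<close>

definition has_decr_subseq :: "nat \<Rightarrow> nat list \<Rightarrow> bool" where
  "has_decr_subseq k w \<longleftrightarrow> (\<exists>s. subseq s w \<and> sorted_wrt (>) s \<and> length s = k)"

definition reading_word :: "nat list list \<Rightarrow> nat list" where
  "reading_word T = concat (rev T)"

text \<open>The elementary Knuth transformations, oriented from the reading word of an insertion
  tableau towards the inserted word.\<close>

inductive knuth_step :: "nat list \<Rightarrow> nat list \<Rightarrow> bool" where
  knuth_yxz: "x < y \<Longrightarrow> y \<le> z \<Longrightarrow> knuth_step (a @ [y, x, z] @ b) (a @ [y, z, x] @ b)"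
| knuth_zxy: "x \<le> y \<Longrightarrow> y < z \<Longrightarrow> knuth_step (a @ [z, x, y] @ b) (a @ [x, z, y] @ b)"

abbreviation knuth_steps :: "nat list \<Rightarrow> nat list \<Rightarrow> bool" where
  "knuth_steps \<equiv> knuth_step\<^sup>*\<^sup>*"

lemma knuth_step_append_context: "knuth_step u v \<Longrightarrow> knuth_step (p @ u @ q) (p @ v @ q)"
proof (induction rule: knuth_step.induct)
  case (knuth_yxz x y z a b)
  then show ?case using knuth_step.knuth_yxz[of x y z "p @ a" "b @ q"] by simp
next
  case (knuth_zxy x y z a b)
  then show ?case using knuth_step.knuth_zxy[of x y z "p @ a" "b @ q"] by simp
qed

lemma knuth_steps_append_context: "knuth_steps u v \<Longrightarrow> knuth_steps (p @ u @ q) (p @ v @ q)"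
  by (induction rule: rtranclp_induct)
    (auto intro: knuth_step_append_context rtranclp.rtrancl_into_rtrancl)

lemma knuth_steps_move_last_into_row:
  "sorted (z # v) \<Longrightarrow> x < z \<Longrightarrow> knuth_steps (z # x # v) (z # v @ [x])"
proof (induction v arbitrary: z)
  case (Cons b v)
  have "knuth_step ([] @ [z, x, b] @ v) ([] @ [z, b, x] @ v)"
    by (rule knuth_yxz) (use Cons.prems in auto)
  moreover have "knuth_steps ([z] @ (b # x # v) @ []) ([z] @ (b # v @ [x]) @ [])"
    by (rule knuth_steps_append_context) (use Cons in auto)
  ultimately show ?case by (simp add: converse_rtranclp_into_rtranclp)
qed simp

lemma knuth_steps_move_first_into_row:
  "sorted u \<Longrightarrow> \<forall>e\<in>set u. e \<le> x \<Longrightarrow> x < z \<Longrightarrow> knuth_steps (z # u @ [x]) (u @ [z, x])"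
proof (induction u arbitrary: x rule: rev_induct)
  case (snoc b u)
  have "knuth_steps ([] @ (z # u @ [b]) @ [x]) ([] @ (u @ [z, b]) @ [x])"
    by (rule knuth_steps_append_context, rule snoc.IH) (use snoc.prems in \<open>auto simp: sorted_append\<close>)
  moreover have "knuth_step (u @ [z, b, x] @ []) (u @ [b, z, x] @ [])"
    by (rule knuth_zxy) (use snoc.prems in auto)
  ultimately show ?case by simp
qed simp

lemma knuth_steps_row_insert:
  assumes "sorted r" "row_insert x r = (Some z, r')"
  shows "knuth_steps (z # r') (r @ [x])"
proof -
  obtain u v where uv: "r = u @ z # v" "r' = u @ x # v" "\<forall>e\<in>set u. e \<le> x" "x < z"
    using row_insert_SomeD[OF assms(2)] by blast
  have "sorted u" "sorted (z # v)" using assms(1) uv(1) by (auto simp: sorted_append)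
  have "knuth_steps ([] @ (z # u @ [x]) @ v) ([] @ (u @ [z, x]) @ v)"
    by (rule knuth_steps_append_context, rule knuth_steps_move_first_into_row)
      (use \<open>sorted u\<close> uv in auto)
  moreover have "knuth_steps (u @ (z # x # v) @ []) (u @ (z # v @ [x]) @ [])"
    by (rule knuth_steps_append_context, rule knuth_steps_move_last_into_row)
      (use \<open>sorted (z # v)\<close> uv in auto)
  ultimately show ?thesis using uv by simp
qed

lemma knuth_steps_tab_insert:
  "\<forall>r\<in>set T. sorted r \<Longrightarrow> knuth_steps (reading_word (tab_insert x T)) (reading_word T @ [x])"
proof (induction x T rule: tab_insert.induct)
  case (2 x r rs)
  obtain b r' where ins: "row_insert x r = (b, r')" by fastforce
  show ?case
  proof (cases b)
    case None
    then show ?thesis using ins row_insert_NoneD[of x r r'] by (simp add: reading_word_def)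
  next
    case (Some z)
    have "knuth_steps ([] @ reading_word (tab_insert z rs) @ r') ([] @ (reading_word rs @ [z]) @ r')"
      by (rule knuth_steps_append_context) (use "2" ins Some in auto)
    moreover have "knuth_steps (reading_word rs @ (z # r') @ []) (reading_word rs @ (r @ [x]) @ [])"
      by (rule knuth_steps_append_context, rule knuth_steps_row_insert) (use "2.prems" ins Some in auto)
    ultimately show ?thesis using ins Some by (simp add: reading_word_def)
  qed
qed (simp add: reading_word_def)

lemma knuth_steps_insertion_tableau: "knuth_steps (reading_word (insertion_tableau w)) w"
proof (induction w rule: rev_induct)
  case (snoc x w)
  have "knuth_steps (reading_word (tab_insert x (insertion_tableau w)))
      (reading_word (insertion_tableau w) @ [x])"
    using knuth_steps_tab_insert insertion_tableau_sorted_rows by blast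
  moreover have "knuth_steps ([] @ reading_word (insertion_tableau w) @ [x]) ([] @ w @ [x])"
    using knuth_steps_append_context[OF snoc] .
  ultimately show ?case by (simp add: insertion_tableau_snoc)
qed (simp add: reading_word_def)

lemma has_decr_subseq_replace_factor:
  assumes "has_decr_subseq k (a @ m @ b)"
    and reroute: "\<And>s. subseq s m \<Longrightarrow> sorted_wrt (>) s \<Longrightarrow>
      \<exists>s'. subseq s' m' \<and> sorted_wrt (>) s' \<and> length s' = length s \<and>
        (\<forall>e\<in>set s'. \<exists>e1\<in>set s. \<exists>e2\<in>set s. e2 \<le> e \<and> e \<le> e1)"
  shows "has_decr_subseq k (a @ m' @ b)"
proof -
  obtain s where s: "subseq s (a @ m @ b)" "sorted_wrt (>) s" "length s = k"
    using assms(1) unfolding has_decr_subseq_def by blast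
  obtain s1 s2 s3 where split: "s = s1 @ s2 @ s3" "subseq s1 a" "subseq s2 m" "subseq s3 b"
    using s(1) by (auto elim!: subseq_appendE)
  have dec: "sorted_wrt (>) s1" "sorted_wrt (>) s2" "sorted_wrt (>) s3"
    and gt: "\<forall>x\<in>set s1. \<forall>y\<in>set s2 \<union> set s3. x > y" "\<forall>x\<in>set s2. \<forall>y\<in>set s3. x > y"
    using s(2) unfolding split(1) sorted_wrt_append by auto
  obtain s2' where s2': "subseq s2' m'" "sorted_wrt (>) s2'" "length s2' = length s2"
    "\<forall>e\<in>set s2'. \<exists>e1\<in>set s2. \<exists>e2\<in>set s2. e2 \<le> e \<and> e \<le> e1"
    using reroute[OF split(3) dec(2)] by blast
  have "subseq (s1 @ s2' @ s3) (a @ m' @ b)"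
    using split(2,4) s2'(1) by (intro list_emb_append_mono)
  moreover have "\<forall>x\<in>set s1. \<forall>y\<in>set s2'. x > y" "\<forall>x\<in>set s2'. \<forall>y\<in>set s3. x > y"
    using gt s2'(4) by (meson UnI1 order_le_less_trans order_less_le_trans)+
  then have "sorted_wrt (>) (s1 @ s2' @ s3)"
    using dec s2'(2) gt(1) by (auto simp: sorted_wrt_append)
  ultimately show ?thesis
    using s(3) split(1) s2'(3) unfolding has_decr_subseq_def by (intro exI[of _ "s1 @ s2' @ s3"]) auto
qed

lemma subseq_three:
  assumes "subseq s [p, q, r]"
  shows "s \<in> {[], [p], [q], [r], [p, q], [p, r], [q, r], [p, q, r]}"
proof -
  have subseq_Cons_right:
    "subseq t (y # ys) \<Longrightarrow> subseq t ys \<or> (\<exists>t'. t = y # t' \<and> subseq t' ys)" for t y and ys :: "'a list"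
    by (cases t) (auto split: if_splits)
  show ?thesis using assms by (auto dest!: subseq_Cons_right)
qed

lemma has_decr_subseq_knuth_step: "knuth_step u v \<Longrightarrow> has_decr_subseq k u \<Longrightarrow> has_decr_subseq k v"
proof (induction rule: knuth_step.induct)
  case (knuth_yxz x y z a b)
  show ?case
  proof (rule has_decr_subseq_replace_factor[OF knuth_yxz.prems])
    fix s assume "subseq s [y, x, z]" "sorted_wrt (>) s"
    with knuth_yxz.hyps have "subseq s [y, z, x]"
      by (auto dest!: subseq_three)
    with \<open>sorted_wrt (>) s\<close> show "\<exists>s'. subseq s' [y, z, x] \<and> sorted_wrt (>) s' \<and> length s' = length s \<and>
        (\<forall>e\<in>set s'. \<exists>e1\<in>set s. \<exists>e2\<in>set s. e2 \<le> e \<and> e \<le> e1)"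
      by (intro exI[of _ s]) auto
  qed
next
  case (knuth_zxy x y z a b)
  show ?case
  proof (rule has_decr_subseq_replace_factor[OF knuth_zxy.prems])
    fix s assume s: "subseq s [z, x, y]" "sorted_wrt (>) s"
    show "\<exists>s'. subseq s' [x, z, y] \<and> sorted_wrt (>) s' \<and> length s' = length s \<and>
        (\<forall>e\<in>set s'. \<exists>e1\<in>set s. \<exists>e2\<in>set s. e2 \<le> e \<and> e \<le> e1)"
    proof (cases "s = [z, x]")
      case True
      then show ?thesis using knuth_zxy.hyps by (intro exI[of _ "[z, y]"]) auto
    next
      case False
      with s knuth_zxy.hyps have "subseq s [x, z, y]"
        by (auto dest!: subseq_three)
      with s(2) show ?thesis by (intro exI[of _ s]) auto
    qed
  qed
qed

lemma has_decr_subseq_knuth_steps: "knuth_steps u v \<Longrightarrow> has_decr_subseq k u \<Longrightarrow> has_decr_subseq k v"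
  by (induction rule: rtranclp_induct) (auto intro: has_decr_subseq_knuth_step)

lemma has_decr_subseq_le: "has_decr_subseq k w \<Longrightarrow> k' \<le> k \<Longrightarrow> has_decr_subseq k' w"
  unfolding has_decr_subseq_def
  by (metis length_take min_absorb2 prefix_imp_subseq subseq_order.order_trans sorted_wrt_take
      take_is_prefix)

definition strict_first_column :: "nat list list \<Rightarrow> bool" where
  "strict_first_column T \<longleftrightarrow> (\<forall>r\<in>set T. r \<noteq> []) \<and> sorted_wrt (<) (map hd T)"

lemma strict_first_column_tab_insert: "strict_first_column T \<Longrightarrow> strict_first_column (tab_insert x T)"
proof (induction x T rule: tab_insert.induct)
  case (1 x)
  then show ?case by (simp add: strict_first_column_def)
next
  case (2 x r rs)
  have nonempty: "\<forall>r\<in>set (tab_insert x (r # rs)). r \<noteq> []"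
    using tab_insert_rows_nonempty "2.prems" unfolding strict_first_column_def by blast
  show ?case
  proof (cases "row_insert x r")
    case (Pair b r')
    have hd: "hd r' = (if r = [] \<or> x < hd r then x else hd r)" using hd_row_insert[of x r] Pair by simp
    show ?thesis
    proof (cases b)
      case None
      then have "r' = r @ [x]" using Pair row_insert_NoneD by blast
      then have "hd r' = hd r" using "2.prems" by (simp add: strict_first_column_def)
      then show ?thesis using nonempty "2.prems" Pair None by (simp add: strict_first_column_def)
    next
      case (Some z)
      obtain u v where uv: "r = u @ z # v" "\<forall>e\<in>set u. e \<le> x" "x < z"
        using row_insert_SomeD[of x r z r'] Pair Some by auto
      have "strict_first_column (tab_insert z rs)"
        using "2.IH"[OF Pair[symmetric] Some] "2.prems" by (simp add: strict_first_column_def)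
      moreover have "hd r' < hd (hd (tab_insert z rs))"
      proof (cases rs)
        case Nil
        then show ?thesis using hd uv by simp
      next
        case (Cons r2 rs2)
        have "hd r < hd r2" using "2.prems" Cons by (simp add: strict_first_column_def)
        moreover have "hd (hd (tab_insert z rs)) = hd (snd (row_insert z r2))"
          using Cons by (cases "row_insert z r2") (auto split: option.splits)
        ultimately show ?thesis using hd_row_insert[of z r2] hd uv by auto
      qed
      moreover have "tab_insert z rs \<noteq> []" by (cases rs) (auto split: prod.splits option.splits)
      ultimately show ?thesis using nonempty Pair Some
        by (cases "tab_insert z rs") (auto simp: strict_first_column_def sorted_wrt2)
    qed
  qed
qed

lemma strict_first_column_insertion_tableau: "strict_first_column (insertion_tableau w)"
proof (induction w rule: rev_induct)
  case (snoc x w)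
  then show ?case by (simp add: insertion_tableau_snoc strict_first_column_tab_insert)
qed (simp add: strict_first_column_def)

lemma has_decr_subseq_first_column:
  assumes "strict_first_column T"
  shows "has_decr_subseq (length T) (reading_word T)"
proof -
  have "subseq (map hd L) (concat L)" if "\<forall>r\<in>set L. r \<noteq> []" for L :: "nat list list"
    using that by (induction L) (auto simp: neq_Nil_conv intro: subseq_drop_many)
  then have "subseq (map hd (rev T)) (reading_word T)"
    using assms by (simp add: strict_first_column_def reading_word_def)
  moreover have "sorted_wrt (>) (map hd (rev T))"
    using assms by (simp add: strict_first_column_def rev_map[symmetric] sorted_wrt_rev)
  ultimately show ?thesis unfolding has_decr_subseq_def by (intro exI[of _ "map hd (rev T)"]) simp
qed

theorem has_decr_subseq_length_insertion_tableau:
  "has_decr_subseq (length (insertion_tableau w)) w"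
  using has_decr_subseq_knuth_steps[OF knuth_steps_insertion_tableau
      has_decr_subseq_first_column[OF strict_first_column_insertion_tableau]] .

section \<open>Splitting off the largest letter\<close>

definition padded_by :: "nat \<Rightarrow> nat list list \<Rightarrow> nat list list \<Rightarrow> (nat \<Rightarrow> nat) \<Rightarrow> bool" where
  "padded_by j T T' a \<longleftrightarrow> (\<forall>s. tab_row T s = tab_row T' s @ replicate (a s) j)"

definition move_pad_up :: "(nat \<Rightarrow> nat) \<Rightarrow> nat \<Rightarrow> nat \<Rightarrow> nat" where
  "move_pad_up a s = (if a s = 0 then a else a(s := a s - 1, Suc s := Suc (a (Suc s))))"

lemma tab_row_tl: "tab_row (tl T) s = tab_row T (Suc s)"
  by (cases T) auto

lemma tab_insert_eq_tab_row:
  "tab_insert x T = (case row_insert x (tab_row T 0) of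
     (None, r') \<Rightarrow> r' # tl T
   | (Some z, r') \<Rightarrow> r' # tab_insert z (tl T))"
  by (cases T) (auto split: prod.split option.split)

lemma new_box_row_eq_tab_row:
  "new_box_row x T = (case row_insert x (tab_row T 0) of
     (None, r') \<Rightarrow> 0
   | (Some z, r') \<Rightarrow> Suc (new_box_row z (tl T)))"
  by (cases T) (auto split: prod.split option.split)

lemma padded_by_Nil: "padded_by j [] T' a \<longleftrightarrow> (\<forall>s. tab_row T' s = [] \<and> a s = 0)"
  by (simp add: padded_by_def)

lemma padded_by_Cons:
  "padded_by j (r # rs) T' a \<longleftrightarrow>
     r = tab_row T' 0 @ replicate (a 0) j \<and> padded_by j rs (tl T') (\<lambda>s. a (Suc s))"
  unfolding padded_by_def tab_row_tl
  by (metis not0_implies_Suc tab_row_simps(2,3))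

lemma length_tab_row_padded_by:
  "padded_by j T T' a \<Longrightarrow> length (tab_row T s) = length (tab_row T' s) + a s"
  by (simp add: padded_by_def)

lemma padded_by_entries_le:
  assumes "padded_by j T T' a" "\<forall>e\<in>tab_entries T'. e \<le> j"
  shows "\<forall>e\<in>tab_entries T. e \<le> j"
proof -
  have "\<forall>e\<in>set (tab_row T s). e \<le> j" for s
    using assms by (auto simp: padded_by_def tab_row_def)
  then show ?thesis by (metis UN_E in_set_conv_nth tab_row_def)
qed

lemma row_insert_padded:
  assumes "x < j"
  shows "row_insert x (r @ replicate k j) = (case row_insert x r of
      (Some z, r') \<Rightarrow> (Some z, r' @ replicate k j)
    | (None, r') \<Rightarrow> if k = 0 then (None, r') else (Some j, r' @ replicate (k - 1) j))"
proof (cases "\<exists>e\<in>set r. x < e")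
  case True
  then have "fst (row_insert x r) \<noteq> None"
    using row_insert_NoneD[of x r] by (metis leD prod.collapse)
  then show ?thesis using row_insert_append_right[OF True] by (auto split: prod.splits option.splits)
next
  case False
  then have "\<forall>e\<in>set r. e \<le> x" by auto
  then show ?thesis using row_insert_append_left[of r x] row_insert_all_le[of r x] assms
    by (cases k) auto
qed

lemma padded_by_tab_insert_largest:
  assumes "padded_by j T T' a" "\<forall>e\<in>tab_entries T'. e \<le> j"
  shows "padded_by j (tab_insert j T) T' (a(0 := Suc (a 0)))"
proof -
  have "\<forall>e\<in>set (tab_row T 0). e \<le> j"
    using padded_by_entries_le[OF assms] by (auto simp: tab_row_def)
  then have "tab_insert j T = (tab_row T 0 @ [j]) # tl T"
    by (simp add: tab_insert_eq_tab_row row_insert_all_le)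
  then show ?thesis
    using assms(1) unfolding padded_by_def
    by (metis fun_upd_apply replicate_Suc replicate_append_same append_assoc tab_row_simps(2,3)
        tab_row_tl nat.exhaust)
qed

lemma padded_by_tab_insert_word_largest:
  assumes "padded_by j T T' a" "\<forall>e\<in>tab_entries T'. e \<le> j"
  shows "padded_by j (tab_insert_word (replicate m j) T) T' (a(0 := a 0 + m))"
  using assms(1)
proof (induction m arbitrary: T a)
  case (Suc m)
  have "padded_by j (tab_insert j T) T' (a(0 := Suc (a 0)))"
    by (rule padded_by_tab_insert_largest[OF Suc.prems assms(2)])
  moreover have "(a(0 := Suc (a 0)))(0 := (a(0 := Suc (a 0))) 0 + m) = a(0 := a 0 + Suc m)"
    by simp
  ultimately show ?case using Suc.IH by (metis replicate_Suc tab_insert_word_simps(2))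
qed simp

lemma move_pad_up_Suc:
  "move_pad_up a (Suc n) 0 = a 0" "(\<lambda>s. move_pad_up a (Suc n) (Suc s)) = move_pad_up (\<lambda>s. a (Suc s)) n"
  by (auto simp: move_pad_up_def)

text \<open>Inserting a letter x < j into the padded tableau proceeds as in T' until the new box of T'
  lands in a padded row; there the first padding letter j is bumped one row up instead.\<close>

lemma padded_by_tab_insert_smaller:
  assumes "padded_by j T T' a" "\<forall>e\<in>tab_entries T'. e < j" "x < j"
  shows "padded_by j (tab_insert x T) (tab_insert x T') (move_pad_up a (new_box_row x T'))"
  using assms
proof (induction T arbitrary: T' a x)
  case Nil
  then have "tab_row T' 0 = []" "\<forall>s. a s = 0" by (auto simp: padded_by_Nil)
  then show ?case
    using Nil.prems(1) tab_insert_eq_tab_row[of x T'] new_box_row_eq_tab_row[of x T']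
    by (simp add: padded_by_Cons padded_by_Nil move_pad_up_def tab_row_tl)
next
  case (Cons r rs)
  have r: "r = tab_row T' 0 @ replicate (a 0) j"
    and rs: "padded_by j rs (tl T') (\<lambda>s. a (Suc s))"
    using Cons.prems(1) by (auto simp: padded_by_Cons)
  have entries: "\<forall>e\<in>set (tab_row T' 0). e < j" "\<forall>e\<in>tab_entries (tl T'). e < j"
    using Cons.prems(2) by (cases T'; auto)+
  note unfold = r tab_insert_eq_tab_row[of x T'] new_box_row_eq_tab_row[of x T'] padded_by_Cons
  note first_row = row_insert_padded[OF Cons.prems(3), of "tab_row T' 0" "a 0"]
  consider (bump) z r' where "row_insert x (tab_row T' 0) = (Some z, r')"
    | (append) r' where "row_insert x (tab_row T' 0) = (None, r')" "a 0 = 0"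
    | (push) r' k where "row_insert x (tab_row T' 0) = (None, r')" "a 0 = Suc k"
    by (metis not0_implies_Suc option.exhaust prod.exhaust)
  then show ?case
  proof cases
    case bump
    then have "z < j" using entries(1) row_insert_bumped_in_row by blast
    from Cons.IH[OF rs entries(2) this] bump first_row show ?thesis
      by (simp add: unfold move_pad_up_Suc)
  next
    case append
    then show ?thesis using rs first_row by (simp add: unfold move_pad_up_def)
  next
    case push
    have "padded_by j (tab_insert j rs) (tl T') ((\<lambda>s. a (Suc s))(0 := Suc (a 1)))"
      using padded_by_tab_insert_largest[OF rs] entries(2) by fastforce
    moreover have "(\<lambda>s. move_pad_up a 0 (Suc s)) = (\<lambda>s. a (Suc s))(0 := Suc (a 1))"
      using push by (auto simp: move_pad_up_def)
    ultimately show ?thesis using push first_row by (simp add: unfold move_pad_up_def)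
  qed
qed

fun new_boxes :: "nat list \<Rightarrow> nat list list \<Rightarrow> nat \<Rightarrow> nat" where
  "new_boxes [] T s = 0"
| "new_boxes (x # w) T s = (if s = new_box_row x T then 1 else 0) + new_boxes w (tab_insert x T) s"

lemma length_tab_row_tab_insert_word:
  "length (tab_row (tab_insert_word w T) s) = length (tab_row T s) + new_boxes w T s"
  by (induction w arbitrary: T) (simp_all add: length_tab_row_tab_insert)

lemma new_boxes_above_first:
  assumes "sorted (x # w)" "\<forall>r\<in>set T. sorted r" "new_box_row x T < s"
  shows "new_boxes w (tab_insert x T) s = 0"
  using assms
proof (induction w arbitrary: x T)
  case (Cons y w)
  have "new_box_row y (tab_insert x T) < s"
    using new_box_row_tab_insert_le[OF Cons.prems(2)] Cons.prems(1,3) by (meson le_less_trans sorted2)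
  then show ?case
    using Cons.IH[of y "tab_insert x T"] Cons.prems(1) tab_insert_sorted_rows[OF Cons.prems(2)] by auto
qed simp

text \<open>The padding left after inserting a word that creates n s new boxes in row s: a sorted
  word fills its rows from the top down, so each padded row passes min (a s) (n s) of its
  letters j to the row above.\<close>

definition pad_after :: "(nat \<Rightarrow> nat) \<Rightarrow> (nat \<Rightarrow> nat) \<Rightarrow> nat \<Rightarrow> nat" where
  "pad_after a n s = a s - min (a s) (n s) + (case s of 0 \<Rightarrow> 0 | Suc s' \<Rightarrow> min (a s') (n s'))"

lemma pad_after_zero: "pad_after a (\<lambda>s. 0) = a"
  by (auto simp: pad_after_def fun_eq_iff split: nat.splits)

lemma pad_after_move_pad_up:
  assumes "\<forall>s>s0. n s = 0"
  shows "pad_after (move_pad_up a s0) n = pad_after a (\<lambda>s. (if s = s0 then 1 else 0) + n s)"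
proof
  fix s
  consider "s < s0" | "s = s0" | "s = Suc s0" | "s > Suc s0" by linarith
  then show "pad_after (move_pad_up a s0) n s = pad_after a (\<lambda>s. (if s = s0 then 1 else 0) + n s) s"
    using assms by cases (auto simp: pad_after_def move_pad_up_def min_def split: nat.splits)
qed

lemma padded_by_tab_insert_word_smaller:
  assumes "padded_by j T T' a" "sorted w" "\<forall>x\<in>set w. x < j"
    and "\<forall>r\<in>set T'. sorted r" "\<forall>e\<in>tab_entries T'. e < j"
  shows "padded_by j (tab_insert_word w T) (tab_insert_word w T') (pad_after a (new_boxes w T'))"
  using assms
proof (induction w arbitrary: T T' a)
  case Nil
  have "new_boxes [] T' = (\<lambda>s. 0)" by auto
  with Nil show ?case by (simp add: pad_after_zero)
next
  case (Cons x w)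
  have "x < j" using Cons.prems(3) by simp
  have "padded_by j (tab_insert x T) (tab_insert x T') (move_pad_up a (new_box_row x T'))"
    using padded_by_tab_insert_smaller[OF Cons.prems(1,5) \<open>x < j\<close>] .
  moreover have "\<forall>e\<in>tab_entries (tab_insert x T'). e < j"
    using tab_entries_tab_insert[of x T'] Cons.prems(5) \<open>x < j\<close> by blast
  ultimately have "padded_by j (tab_insert_word w (tab_insert x T))
      (tab_insert_word w (tab_insert x T'))
      (pad_after (move_pad_up a (new_box_row x T')) (new_boxes w (tab_insert x T')))"
    using Cons.IH Cons.prems(2,3,4) tab_insert_sorted_rows by auto
  moreover have "\<forall>s>new_box_row x T'. new_boxes w (tab_insert x T') s = 0"
    using new_boxes_above_first[OF Cons.prems(2,4)] by blast
  ultimately show ?case by (simp add: pad_after_move_pad_up)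
qed

lemma padded_by_insertion_tableau_filter:
  assumes "\<forall>x\<in>set w. x \<le> j"
  shows "\<exists>a. padded_by j (insertion_tableau w) (insertion_tableau (filter (\<lambda>y. y < j) w)) a"
  using assms
proof (induction w rule: rev_induct)
  case Nil
  then show ?case by (auto simp: padded_by_def)
next
  case (snoc x w)
  define T' where "T' = insertion_tableau (filter (\<lambda>y. y < j) w)"
  obtain a where a: "padded_by j (insertion_tableau w) T' a"
    using snoc unfolding T'_def by auto
  have entries: "\<forall>e\<in>tab_entries T'. e < j"
    using tab_entries_insertion_tableau unfolding T'_def by fastforce
  show ?case
  proof (cases "x < j")
    case True
    then have "insertion_tableau (filter (\<lambda>y. y < j) (w @ [x])) = tab_insert x T'"
      by (simp add: T'_def insertion_tableau_snoc)
    then show ?thesis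
      using padded_by_tab_insert_smaller[OF a entries True] by (auto simp: insertion_tableau_snoc)
  next
    case False
    then have "x = j" "insertion_tableau (filter (\<lambda>y. y < j) (w @ [x])) = T'"
      using snoc.prems by (simp_all add: T'_def)
    moreover have "\<forall>e\<in>tab_entries T'. e \<le> j" using entries less_imp_le by blast
    ultimately show ?thesis
      using padded_by_tab_insert_largest[OF a] by (auto simp: insertion_tableau_snoc)
  qed
qed

section \<open>The shapes of insertion tableaux obey the RSK local rule\<close>

definition shape :: "nat list list \<Rightarrow> partition" where
  "shape T i = (if i = 0 then 0 else length (tab_row T (i - 1)))"

text \<open>The RSK local rule solved for the top-right corner.\<close>

definition rsk_grow :: "partition \<Rightarrow> partition \<Rightarrow> partition \<Rightarrow> nat \<Rightarrow> partition" where
  "rsk_grow \<kappa> \<mu> \<nu> m i =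
     (if i = 0 then 0
      else max (\<mu> i) (\<nu> i) + (if i = 1 then m else min (\<mu> (i - 1)) (\<nu> (i - 1)) - \<kappa> (i - 1)))"

text \<open>Inserting c into W and into its restriction T' to the letters below j creates the same
  new boxes; the padding of W by letters j is then pushed up and lengthened by m.\<close>

lemma length_tab_row_insertion_tableau_append:
  assumes "\<forall>x\<in>set W. x \<le> j" "sorted c" "\<forall>x\<in>set c. x < j"
    and T': "T' = insertion_tableau (filter (\<lambda>y. y < j) W)"
  obtains a n where
    "\<And>s. length (tab_row (insertion_tableau W) s) = length (tab_row T' s) + a s"
    "\<And>s. length (tab_row (insertion_tableau (filter (\<lambda>y. y < j) W @ c)) s) = length (tab_row T' s) + n s"
    "\<And>s. length (tab_row (insertion_tableau (W @ c @ replicate m j)) s) =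
       length (tab_row T' s) + n s + ((pad_after a n)(0 := pad_after a n 0 + m)) s"
proof -
  obtain a where a: "padded_by j (insertion_tableau W) T' a"
    using padded_by_insertion_tableau_filter[OF assms(1)] T' by blast
  have entries: "\<forall>e\<in>tab_entries T'. e < j"
    using tab_entries_insertion_tableau T' by fastforce
  define n where "n = new_boxes c T'"
  have "padded_by j (tab_insert_word c (insertion_tableau W)) (tab_insert_word c T') (pad_after a n)"
    unfolding n_def
    by (rule padded_by_tab_insert_word_smaller[OF a assms(2,3) _ entries])
      (simp add: T' insertion_tableau_sorted_rows)
  moreover have "\<forall>e\<in>tab_entries (tab_insert_word c T'). e \<le> j"
    using tab_entries_insertion_tableau[of "filter (\<lambda>y. y < j) W @ c"] assms(3)
    by (fastforce simp: T' insertion_tableau_append)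
  ultimately have "padded_by j (insertion_tableau (W @ c @ replicate m j))
      (tab_insert_word c T') ((pad_after a n)(0 := pad_after a n 0 + m))"
    unfolding insertion_tableau_append tab_insert_word_simps by (rule padded_by_tab_insert_word_largest)
  then have "length (tab_row (insertion_tableau (W @ c @ replicate m j)) s) =
      length (tab_row T' s) + n s + ((pad_after a n)(0 := pad_after a n 0 + m)) s" for s
    using length_tab_row_padded_by length_tab_row_tab_insert_word[of c T' s]
    by (simp add: n_def)
  moreover have "length (tab_row (insertion_tableau (filter (\<lambda>y. y < j) W @ c)) s) =
      length (tab_row T' s) + n s" for s
    by (simp add: T' n_def insertion_tableau_append length_tab_row_tab_insert_word)
  ultimately show ?thesis
    using that length_tab_row_padded_by[OF a] by blast
qed

text \<open>W restricted to the letters below j, W, and that restriction followed by c sit at the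
  bottom-left, top-left and bottom-right corners of a cell with entry m.\<close>

theorem shape_insertion_tableau_rsk_grow:
  assumes "\<forall>x\<in>set W. x \<le> j" "sorted c" "\<forall>x\<in>set c. x < j"
  shows "shape (insertion_tableau (W @ c @ replicate m j)) =
    rsk_grow (shape (insertion_tableau (filter (\<lambda>y. y < j) W))) (shape (insertion_tableau W))
      (shape (insertion_tableau (filter (\<lambda>y. y < j) W @ c))) m"
    (is "shape ?R = rsk_grow (shape ?K) (shape ?M) (shape ?N) m")
proof
  fix i
  obtain a n where mu: "\<And>s. length (tab_row ?M s) = length (tab_row ?K s) + a s"
    and nu: "\<And>s. length (tab_row ?N s) = length (tab_row ?K s) + n s"
    and rho: "\<And>s. length (tab_row ?R s) =
      length (tab_row ?K s) + n s + ((pad_after a n)(0 := pad_after a n 0 + m)) s"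
    using length_tab_row_insertion_tableau_append[OF assms refl] by blast
  consider "i = 0" | "i = 1" | s where "i = Suc (Suc s)" by (metis One_nat_def not0_implies_Suc)
  then show "shape ?R i = rsk_grow (shape ?K) (shape ?M) (shape ?N) m i"
  proof cases
    case 1
    then show ?thesis by (simp add: shape_def rsk_grow_def)
  next
    case 2
    have "pad_after a n 0 = a 0 - min (a 0) (n 0)" by (simp add: pad_after_def)
    then show ?thesis using 2 rho[of 0] mu[of 0] nu[of 0]
      by (simp add: shape_def rsk_grow_def)
  next
    case 3
    let ?k = "\<lambda>s. length (tab_row ?K s)"
    have "shape ?R i =
        ?k (Suc s) + n (Suc s) + (a (Suc s) + min (a s) (n s)) - min (a (Suc s)) (n (Suc s))"
      using 3 rho[of "Suc s"] by (simp add: shape_def pad_after_def)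
    also have "\<dots> = max (?k (Suc s) + a (Suc s)) (?k (Suc s) + n (Suc s))
        + min (?k s + a s) (?k s + n s) - ?k s"
      by (simp add: max_def min_def)
    also have "\<dots> = rsk_grow (shape ?K) (shape ?M) (shape ?N) m i"
      using 3 mu nu by (simp add: shape_def rsk_grow_def)
    finally show ?thesis .
  qed
qed

section \<open>Reading the filling as a word\<close>

definition column_word :: "(nat \<times> nat \<Rightarrow> nat) \<Rightarrow> nat \<Rightarrow> nat \<Rightarrow> nat list" where
  "column_word fill i y = concat (map (\<lambda>j. replicate (fill (i, j)) j) [1..<Suc y])"

definition filling_word :: "(nat \<times> nat \<Rightarrow> nat) \<Rightarrow> nat \<Rightarrow> nat \<Rightarrow> nat list" where
  "filling_word fill x y = concat (map (\<lambda>i. column_word fill i y) [1..<Suc x])"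

lemma column_word_0 [simp]: "column_word fill i 0 = []"
  by (simp add: column_word_def)

lemma column_word_Suc:
  "column_word fill i (Suc y) = column_word fill i y @ replicate (fill (i, Suc y)) (Suc y)"
  by (simp add: column_word_def)

lemma filling_word_0_left [simp]: "filling_word fill 0 y = []"
  by (simp add: filling_word_def)

lemma filling_word_Suc:
  "filling_word fill (Suc x) y = filling_word fill x y @ column_word fill (Suc x) y"
  by (simp add: filling_word_def)

lemma filling_word_0_right [simp]: "filling_word fill x 0 = []"
  by (induction x) (simp_all add: filling_word_Suc)

lemma set_column_word: "set (column_word fill i y) = {j. 1 \<le> j \<and> j \<le> y \<and> fill (i, j) \<noteq> 0}"
  by (auto simp: column_word_def)

lemma set_filling_word: "j \<in> set (filling_word fill x y) \<Longrightarrow> j \<le> y"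
  by (induction x) (auto simp: filling_word_Suc set_column_word)

lemma sorted_column_word: "sorted (column_word fill i y)"
  by (induction y) (auto simp: column_word_Suc sorted_append set_column_word)

lemma filter_column_word: "filter (\<lambda>j. j < Suc y) (column_word fill i (Suc y)) = column_word fill i y"
  by (simp add: column_word_Suc set_column_word)

lemma filter_filling_word:
  "filter (\<lambda>j. j < Suc y) (filling_word fill x (Suc y)) = filling_word fill x y"
  by (induction x) (simp_all add: filling_word_Suc filter_column_word)

theorem shape_filling_word_rsk_grow:
  "shape (insertion_tableau (filling_word fill (Suc x) (Suc y))) =
     rsk_grow (shape (insertion_tableau (filling_word fill x y)))
       (shape (insertion_tableau (filling_word fill x (Suc y))))
       (shape (insertion_tableau (filling_word fill (Suc x) y))) (fill (Suc x, Suc y))"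
proof -
  have "filling_word fill (Suc x) (Suc y) =
      filling_word fill x (Suc y) @ column_word fill (Suc x) y @
        replicate (fill (Suc x, Suc y)) (Suc y)"
    by (simp add: filling_word_Suc column_word_Suc)
  moreover have "\<forall>j\<in>set (filling_word fill x (Suc y)). j \<le> Suc y"
    using set_filling_word by blast
  moreover have "\<forall>j\<in>set (column_word fill (Suc x) y). j < Suc y"
    by (auto simp: set_column_word)
  ultimately show ?thesis
    using shape_insertion_tableau_rsk_grow[OF _ sorted_column_word]
    by (simp add: filter_filling_word filling_word_Suc)
qed

lemma length_le_1_if_decreasing_subseq_of_sorted:
  assumes "subseq s xs" "sorted xs" "sorted_wrt (>) s"
  shows "length s \<le> 1"
proof -
  have "sorted s" using assms(1,2) by (auto simp: subseq_conv_nths sorted_nths)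
  with assms(3) show ?thesis by (cases s; cases "tl s") auto
qed

text \<open>A strictly decreasing subsequence uses at most one letter per column of the filling.\<close>

lemma se_chain_if_decreasing_subseq_filling_word:
  assumes "subseq s (filling_word fill x y)" "sorted_wrt (>) s"
  shows "\<exists>cs. se_chain fill (rect (x, y)) cs \<and> map snd cs = s"
  using assms
proof (induction x arbitrary: s)
  case 0
  then show ?case using list_emb_Nil2 by (intro exI[of _ "[]"]) (fastforce simp: se_chain_def)
next
  case (Suc x)
  obtain s1 s2 where s: "s = s1 @ s2" "subseq s1 (filling_word fill x y)"
      "subseq s2 (column_word fill (Suc x) y)"
    using Suc.prems(1) unfolding filling_word_Suc by (auto elim: subseq_appendE)
  have dec: "sorted_wrt (>) s1" "sorted_wrt (>) s2" "\<forall>a\<in>set s1. \<forall>b\<in>set s2. a > b"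
    using Suc.prems(2) unfolding s(1) sorted_wrt_append by blast+
  obtain cs1 where cs1: "se_chain fill (rect (x, y)) cs1" "map snd cs1 = s1"
    using Suc.IH[OF s(2) dec(1)] by blast
  have rect: "rect (x, y) \<subseteq> rect (Suc x, y)" by (auto simp: rect_def)
  have "length s2 \<le> 1"
    by (rule length_le_1_if_decreasing_subseq_of_sorted[OF s(3) sorted_column_word dec(2)])
  then consider "s2 = []" | j where "s2 = [j]" by (cases s2) auto
  then show ?case
  proof cases
    case 1
    then show ?thesis using cs1 rect s(1) by (intro exI[of _ cs1]) (auto simp: se_chain_def)
  next
    case 2
    then have j: "1 \<le> j" "j \<le> y" "fill (Suc x, j) \<noteq> 0"
      using s(3) by (auto simp: subseq_singleton_left set_column_word)
    have "fst c < Suc x" "j < snd c" if "c \<in> set cs1" for c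
      using that cs1 dec(3) 2 by (auto simp: se_chain_def rect_def)
    then have "se_chain fill (rect (Suc x, y)) (cs1 @ [(Suc x, j)])"
      using cs1(1) rect j
      by (auto simp: se_chain_def rect_def nth_append last_conv_nth not_less_eq less_Suc_eq)
    then show ?thesis using cs1(2) s(1) 2 by (intro exI[of _ "cs1 @ [(Suc x, j)]"]) auto
  qed
qed

lemma length_insertion_tableau_filling_word_lt:
  assumes "\<not> (\<exists>cs. se_chain fill (rect (P, Q)) cs \<and> length cs = d)" "x \<le> P" "y \<le> Q"
  shows "length (insertion_tableau (filling_word fill x y)) < d"
proof (rule ccontr)
  assume "\<not> ?thesis"
  then have "has_decr_subseq d (filling_word fill x y)"
    using has_decr_subseq_length_insertion_tableau has_decr_subseq_le by (meson not_less)
  then obtain s where "subseq s (filling_word fill x y)" "sorted_wrt (>) s" "length s = d"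
    by (auto simp: has_decr_subseq_def)
  then obtain cs where "se_chain fill (rect (x, y)) cs" "length cs = d"
    using se_chain_if_decreasing_subseq_filling_word by (metis length_map)
  moreover have "rect (x, y) \<subseteq> rect (P, Q)" using assms(2,3) by (auto simp: rect_def)
  ultimately have "se_chain fill (rect (P, Q)) cs"
    unfolding se_chain_def by blast
  with \<open>length cs = d\<close> assms(1) show False by blast
qed

section \<open>Local rules and the growth diagram\<close>

lemma rsk_local_rule_if_d_rsk_local_rule:
  assumes rule: "d_rsk_local_rule d \<kappa> \<mu> \<nu> \<rho> m"
    and zero: "\<kappa> d = 0" "\<mu> d = 0" "\<nu> d = 0" and "1 \<le> d"
  shows "rsk_local_rule \<kappa> \<mu> \<nu> \<rho> m"
proof -
  have beyond_d: "\<kappa> i = 0" "\<mu> i = 0" "\<nu> i = 0" "\<rho> i = 0" if "d < i" for i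
    using rule that unfolding d_rsk_local_rule_def is_d_partition_def by auto
  have "\<rho> i + \<kappa> (i - 1) = min (\<mu> (i - 1)) (\<nu> (i - 1)) + max (\<mu> i) (\<nu> i)" if "2 \<le> i" for i
  proof -
    consider "i \<le> d" | "i = Suc d" | "Suc d < i" by linarith
    then show ?thesis
      using rule \<open>2 \<le> i\<close> zero beyond_d[of i] beyond_d[of "i - 1"]
      by cases (auto simp: d_rsk_local_rule_def)
  qed
  with rule zero show ?thesis
    by (auto simp: rsk_local_rule_def d_rsk_local_rule_def is_d_partition_def)
qed

lemma rsk_local_rule_imp_eq_rsk_grow:
  assumes "rsk_local_rule \<kappa> \<mu> \<nu> \<rho> m"
  shows "\<rho> = rsk_grow \<kappa> \<mu> \<nu> m"
proof
  fix i :: nat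
  consider "i = 0" | "i = 1" | "2 \<le> i" by linarith
  then show "\<rho> i = rsk_grow \<kappa> \<mu> \<nu> m i"
  proof cases
    case 3
    then have "\<kappa> (i - 1) \<le> min (\<mu> (i - 1)) (\<nu> (i - 1))"
      and "\<rho> i + \<kappa> (i - 1) = min (\<mu> (i - 1)) (\<nu> (i - 1)) + max (\<mu> i) (\<nu> i)"
      using assms by (auto simp: rsk_local_rule_def interlaces_def)
    moreover have "rsk_grow \<kappa> \<mu> \<nu> m i = max (\<mu> i) (\<nu> i) + (min (\<mu> (i - 1)) (\<nu> (i - 1)) - \<kappa> (i - 1))"
      using 3 by (simp add: rsk_grow_def)
    ultimately show ?thesis by linarith
  qed (use assms in \<open>auto simp: rsk_local_rule_def rsk_grow_def is_partition_def\<close>)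
qed

lemma shape_eq_0_if_length_lt: "length T < i \<Longrightarrow> shape T i = 0"
  by (simp add: shape_def tab_row_def)

lemma shape_Nil: "shape [] = empty_partition"
  by (simp add: fun_eq_iff shape_def empty_partition_def)

lemma young_diagram_cell_below:
  "young_diagram F \<Longrightarrow> (i, j) \<in> F \<Longrightarrow> 1 \<le> i' \<Longrightarrow> i' \<le> i \<Longrightarrow> 1 \<le> j' \<Longrightarrow> j' \<le> j \<Longrightarrow> (i', j') \<in> F"
  unfolding young_diagram_def by blast

lemma cell_above_lattice_point:
  assumes "(x, y) \<in> lattice_points F" "(x, y) \<noteq> (0, 0)"
  shows "\<exists>i j. (i, j) \<in> F \<and> x \<le> i \<and> y \<le> j"
proof -
  obtain i j where "(i, j) \<in> F" "x = i - 1 \<or> x = i" "y = j - 1 \<or> y = j"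
    using assms unfolding lattice_points_def by blast
  then show ?thesis by (intro exI[of _ i] exI[of _ j]) auto
qed

lemma rect_subset_if_lattice_point:
  assumes "young_diagram F" "(x, y) \<in> lattice_points F"
  shows "rect (x, y) \<subseteq> F"
proof
  fix c assume c: "c \<in> rect (x, y)"
  then have "(x, y) \<noteq> (0, 0)" by (auto simp: rect_def)
  then obtain i j where "(i, j) \<in> F" "x \<le> i" "y \<le> j"
    using cell_above_lattice_point[OF assms(2)] by blast
  with c show "c \<in> F"
    using young_diagram_cell_below[OF assms(1)] by (auto simp: rect_def)
qed

lemma lattice_point_below:
  assumes "young_diagram F" "(x, y) \<in> lattice_points F" "x' \<le> x" "y' \<le> y"
  shows "(x', y') \<in> lattice_points F"
proof (cases "(x', y') = (0, 0)")
  case False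
  then have "(x, y) \<noteq> (0, 0)" using assms(3,4) by auto
  then obtain i j where "(i, j) \<in> F" "x \<le> i" "y \<le> j"
    using cell_above_lattice_point[OF assms(2)] by blast
  moreover have "1 \<le> i" "1 \<le> j"
    using \<open>(i, j) \<in> F\<close> assms(1) unfolding young_diagram_def by auto
  ultimately have "(max 1 x', max 1 y') \<in> F"
    using young_diagram_cell_below[OF assms(1)] assms(3,4) by simp
  moreover have "x' = max 1 x' - 1 \<or> x' = max 1 x'" "y' = max 1 y' - 1 \<or> y' = max 1 y'"
    by auto
  ultimately show ?thesis
    unfolding lattice_points_def by blast
qed (simp add: lattice_points_def)

lemma no_se_chain_imp_pos:
  assumes "\<not> (\<exists>cs. se_chain fill S cs \<and> length cs = d)"
  shows "1 \<le> d"
proof (rule ccontr)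
  assume "\<not> 1 \<le> d"
  then have "se_chain fill S [] \<and> length [] = d" by (simp add: se_chain_def)
  with assms show False by blast
qed

lemma shape_filling_word_part_eq_0:
  assumes "\<not> (\<exists>cs. se_chain fill (rect (P, Q)) cs \<and> length cs = d)" "x \<le> P" "y \<le> Q"
  shows "shape (insertion_tableau (filling_word fill x y)) d = 0"
  using shape_eq_0_if_length_lt[OF length_insertion_tableau_filling_word_lt[OF assms]] .

lemma growth_diagram_eq_shape_filling_word:
  assumes growth: "d_rsk_growth_diagram d F fill lam"
    and corner: "(P, Q) \<in> lattice_points F"
    and no_chain: "\<not> (\<exists>cs. se_chain fill (rect (P, Q)) cs \<and> length cs = d)"
    and "x \<le> P" "y \<le> Q"
  shows "lam (x, y) = shape (insertion_tableau (filling_word fill x y))"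
  using \<open>x \<le> P\<close> \<open>y \<le> Q\<close>
proof (induction "x + y" arbitrary: x y rule: less_induct)
  case less
  have F: "young_diagram F" using growth by (simp add: d_rsk_growth_diagram_def)
  show ?case
  proof (cases "x = 0 \<or> y = 0")
    case True
    then show ?thesis
      using growth lattice_point_below[OF F corner less.prems]
      by (auto simp: d_rsk_growth_diagram_def shape_Nil)
  next
    case False
    then obtain i j where ij: "x = Suc i" "y = Suc j" by (meson not0_implies_Suc)
    have "(x, y) \<in> F"
      using rect_subset_if_lattice_point[OF F corner] less.prems ij by (auto simp: rect_def)
    then have "d_rsk_local_rule d (lam (i, j)) (lam (i, y)) (lam (x, j)) (lam (x, y)) (fill (x, y))"
      using growth ij by (auto simp: d_rsk_growth_diagram_def cell_satisfies_d_rsk_def)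
    moreover have "lam (i, j) = shape (insertion_tableau (filling_word fill i j))"
      "lam (i, y) = shape (insertion_tableau (filling_word fill i y))"
      "lam (x, j) = shape (insertion_tableau (filling_word fill x j))"
      using less ij by auto
    ultimately have "lam (x, y) = rsk_grow (lam (i, j)) (lam (i, y)) (lam (x, j)) (fill (x, y))"
      using less.prems ij shape_filling_word_part_eq_0[OF no_chain] no_se_chain_imp_pos[OF no_chain]
      by (intro rsk_local_rule_imp_eq_rsk_grow rsk_local_rule_if_d_rsk_local_rule) auto
    then show ?thesis
      using shape_filling_word_rsk_grow \<open>lam (i, j) = _\<close> \<open>lam (i, y) = _\<close> \<open>lam (x, j) = _\<close> ij
      by simp
  qed
qed

theorem lemma5p2:
  fixes d :: nat and F :: "(nat \<times> nat) set" and fill :: "nat \<times> nat \<Rightarrow> nat"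
    and lam :: "nat \<times> nat \<Rightarrow> partition" and p :: "nat \<times> nat"
  assumes "d_rsk_growth_diagram d F fill lam"
    and "p \<in> lattice_points F"
    and "\<not> (\<exists>cs. se_chain fill (rect p) cs \<and> length cs = d)"
  shows "\<forall>c\<in>rect p. cell_satisfies_rsk fill lam c"
proof -
  obtain P Q where p: "p = (P, Q)" by fastforce
  have no_chain: "\<not> (\<exists>cs. se_chain fill (rect (P, Q)) cs \<and> length cs = d)"
    using assms(3) p by simp
  have part_d: "lam (x, y) d = 0" if "x \<le> P" "y \<le> Q" for x y
    using growth_diagram_eq_shape_filling_word[OF assms(1) assms(2)[unfolded p] no_chain that]
      shape_filling_word_part_eq_0[OF no_chain that] by simp
  show ?thesis
  proof
    fix c assume "c \<in> rect p"
    then obtain i j where c: "c = (i, j)" "1 \<le> i" "i \<le> P" "1 \<le> j" "j \<le> Q"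
      by (auto simp: p rect_def)
    have "c \<in> F"
      using rect_subset_if_lattice_point assms(1,2) \<open>c \<in> rect p\<close> p
      by (auto simp: d_rsk_growth_diagram_def)
    then have "d_rsk_local_rule d (lam (i - 1, j - 1)) (lam (i - 1, j)) (lam (i, j - 1)) (lam (i, j))
        (fill (i, j))"
      using assms(1) c(1) by (auto simp: d_rsk_growth_diagram_def cell_satisfies_d_rsk_def)
    then show "cell_satisfies_rsk fill lam c"
      using c part_d no_se_chain_imp_pos[OF no_chain]
      by (auto simp: cell_satisfies_rsk_def intro!: rsk_local_rule_if_d_rsk_local_rule)
  qed
qed

end
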